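(* Let $p>2$ be a prime, $d\geq 2$ an integer with $d\mid p-1$, $f=(p-1)/d$, and $\omega$ a fixed generator of $\mathbb{F}_p^*$. Let $\theta=0$ if $f$ is even and $\theta=d/2$ if $f$ is odd. Let $\zeta\in\mathbb{C}$ be a primitive $p$-th root of unity and, for $i\in\mathbb{Z}/d\mathbb{Z}$, let $\eta_i=\sum_{k=0}^{f-1}\zeta^{\omega^{kd+i}}$ be the Gauss periods. For $i,j\in\mathbb{Z}/d\mathbb{Z}$ let $(i,j)=\#\{(u,v):0\leq u,v\leq f-1,\ 1+\omega^{du+i}\equiv\omega^{dv+j}\pmod p\}$ be the cyclotomic numbers of order $d$. For integers $k\geq 0$ and $0\leq\nu\leq d-1$ put $n(k,\nu)=\sum_{i=0}^{d-1}\eta_i^k\,\eta_{i+\nu}$ (indices mod $d$). Then $n(0,\nu)=-1$, $n(1,\nu)=p\,\delta_{\theta\nu}-f$, and for all $0\leq\nu\leq d-1$ and $k\geq 1$, \[ n(k+1,\nu)=\sum_{l=0}^{d-1}(\nu,l)\,n(k,l)+f\,\delta_{\theta\nu}\,n(k-1,0), \] where $\delta$ denotes the Kronecker delta.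
   Context: Indices of $\eta_i$ and of the cyclotomic numbers $(i,j)$ are taken modulo $d$. $\omega^{m}$ in the exponent of $\zeta$ is interpreted via any integer representative of $\omega^m\in\mathbb{F}_p$. *)

theory Defs
  imports "HOL-Analysis.Analysis" "HOL-Number_Theory.Number_Theory"
begin

definition prim_root_unity :: "nat \<Rightarrow> complex \<Rightarrow> bool" where
  "prim_root_unity p z \<longleftrightarrow> z ^ p = 1 \<and> (\<forall>k. 0 < k \<and> k < p \<longrightarrow> z ^ k \<noteq> 1)"

definition gauss_period :: "nat \<Rightarrow> nat \<Rightarrow> nat \<Rightarrow> complex \<Rightarrow> nat \<Rightarrow> complex" where
  "gauss_period p d \<omega> \<zeta> i =
     (\<Sum>k<(p - 1) div d. \<zeta> ^ (\<omega> ^ (k * d + i mod d) mod p))"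

definition cyc_num :: "nat \<Rightarrow> nat \<Rightarrow> nat \<Rightarrow> nat \<Rightarrow> nat \<Rightarrow> nat" where
  "cyc_num p d \<omega> i j =
     card {(u, v). u < (p - 1) div d \<and> v < (p - 1) div d \<and>
        [1 + \<omega> ^ (d * u + i mod d) = \<omega> ^ (d * v + j mod d)] (mod p)}"

definition nsum :: "nat \<Rightarrow> nat \<Rightarrow> nat \<Rightarrow> complex \<Rightarrow> nat \<Rightarrow> nat \<Rightarrow> complex" where
  "nsum p d \<omega> \<zeta> k \<nu> =
     (\<Sum>i<d. gauss_period p d \<omega> \<zeta> i ^ k * gauss_period p d \<omega> \<zeta> ((i + \<nu>) mod d))"

end

theory Submission
  imports Defs
begin

(* Write eta_i = sum_(u<f) zeta^(w^(du+i)) with w = omega.  Shifting the summation index of the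
   second factor gives eta_i eta_(i+nu) = sum_v sum_u zeta^(w^(du+i) (1 + w^(dv+nu))).  The inner
   sum is f when p divides 1 + w^(dv+nu), i.e. when dv + nu = (p-1)/2; this happens for exactly
   one v if nu = theta = ((p-1)/2) mod d and for none otherwise.  Else 1 + w^(dv+nu) = w^e and the
   inner sum is eta_(i+e); counting the exponents e by their residue l mod d yields the
   cyclotomic number (nu,l).  Hence eta_i eta_(i+nu) = f delta + sum_l (nu,l) eta_(i+l), and
   multiplying by eta_i^k and summing over i gives the recurrence.  The initial values come from
   sum_i eta_i = zeta + ... + zeta^(p-1) = -1. *)

lemma sum_lessThan_shift_periodic:
  fixes G :: "nat \<Rightarrow> 'a::cancel_comm_monoid_add"
  assumes "\<And>x. G (x + n) = G x"
  shows "(\<Sum>k<n. G (k + s)) = (\<Sum>k<n. G k)"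
proof (induction s)
  case (Suc s)
  have "(\<Sum>k<Suc n. G (k + s)) = G s + (\<Sum>k<n. G (k + Suc s))"
    by (subst sum.lessThan_Suc_shift) simp
  moreover have "(\<Sum>k<Suc n. G (k + s)) = (\<Sum>k<n. G (k + s)) + G s"
    using assms[of s] by (simp add: add.commute)
  ultimately show ?case
    using Suc by (simp add: add.commute)
qed simp

lemma sum_lessThan_mult_split:
  fixes F :: "nat \<Rightarrow> 'a::comm_monoid_add"
  shows "(\<Sum>a<d * n. F a) = (\<Sum>l<d. \<Sum>q<n. F (d * q + l))"
proof -
  have "(\<Sum>a<d * n. F a) = (\<Sum>q<n. \<Sum>a\<in>{q * d..<q * d + d}. F a)"
    by (simp add: sum.nat_group mult.commute)
  also have "\<dots> = (\<Sum>q<n. \<Sum>l<d. F (d * q + l))"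
    by (simp add: sum.atLeastLessThan_shift_0 atLeast0LessThan mult.commute add.commute)
  finally show ?thesis
    by (simp add: sum.swap[of _ "{..<n}"])
qed

lemma of_nat_card_pairs_eq_sum:
  fixes n :: nat
  shows "of_nat (card {(u, v). u < n \<and> v < n \<and> P u v}) =
    (\<Sum>u<n. \<Sum>v<n. if P u v then 1 else (0::'a::semiring_1))"
proof -
  have "{(u, v). u < n \<and> v < n \<and> P u v} = (SIGMA u:{..<n}. {v \<in> {..<n}. P u v})"
    by auto
  moreover have "of_nat (card {v \<in> {..<n}. P u v}) = (\<Sum>v<n. if P u v then 1 else (0::'a))" for u
    by (simp add: sum.If_cases Int_def)
  ultimately show ?thesis
    by simp
qed

lemma even_mult_div_2_mod:
  fixes d n :: nat
  assumes "even (d * n)"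
  shows "(d * n div 2) mod d = (if even n then 0 else d div 2)"
proof (cases "even n")
  case True
  then show ?thesis
    by (auto elim: evenE)
next
  case False
  then obtain r m where "d = 2 * r" "n = 2 * m + 1"
    using assms by (auto elim!: evenE oddE)
  then show ?thesis
    by (simp add: algebra_simps)
qed

lemma prim_root_unity_power_mod:
  assumes "prim_root_unity p \<zeta>"
  shows "\<zeta> ^ x = \<zeta> ^ (x mod p)"
proof -
  have "\<zeta> ^ x = \<zeta> ^ (p * (x div p) + x mod p)"
    by simp
  also have "\<dots> = (\<zeta> ^ p) ^ (x div p) * \<zeta> ^ (x mod p)"
    by (simp only: power_add power_mult)
  finally show ?thesis
    using assms by (simp add: prim_root_unity_def)
qed

lemma prim_root_unity_power_cong:
  assumes "prim_root_unity p \<zeta>" "[x = y] (mod p)"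
  shows "\<zeta> ^ x = \<zeta> ^ y"
  using prim_root_unity_power_mod[OF assms(1), of x] prim_root_unity_power_mod[OF assms(1), of y]
    assms(2) by (simp add: cong_def)

lemma prim_root_unity_sum_powers:
  assumes "prim_root_unity p \<zeta>" "p > 1"
  shows "(\<Sum>x\<in>{0<..<p}. \<zeta> ^ x) = -1"
proof -
  have "\<zeta> \<noteq> 1"
    using assms by (auto simp: prim_root_unity_def)
  then have "(\<Sum>x<p. \<zeta> ^ x) = 0"
    using assms(1) by (simp add: geometric_sum prim_root_unity_def)
  moreover have "{..<p} = insert 0 {0<..<p}"
    using assms(2) by auto
  ultimately show ?thesis
    by (simp add: add_eq_0_iff)
qed

lemma prime_primroot_power_cong_iff:
  assumes "prime p" "residue_primroot p g"
  shows "[g ^ a = g ^ b] (mod p) \<longleftrightarrow> [a = b] (mod p - 1)"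
  using assms order_divides_expdiff by (simp add: residue_primroot_def totient_prime)

lemma prime_not_dvd_primroot_power:
  assumes "prime p" "residue_primroot p g"
  shows "\<not> p dvd g ^ a"
proof -
  have "coprime p (g ^ a)"
    using assms(2) by (simp add: residue_primroot_def)
  then show ?thesis
    using assms(1) coprime_absorb_left not_prime_unit by blast
qed

lemma prime_primroot_discrete_log:
  assumes "prime p" "residue_primroot p g" "\<not> p dvd x"
  obtains e where "e < p - 1" "[g ^ e = x] (mod p)"
proof -
  have "bij_betw (\<lambda>a. g ^ a mod p) {..<p - 1} {0<..<p}"
    using residue_primroot_is_generator[of p g] prime_gt_1_nat[OF assms(1)] assms
    by (simp add: totient_prime totatives_prime)
  moreover have "x mod p \<in> {0<..<p}"
    using assms by (simp add: prime_gt_0_nat dvd_eq_mod_eq_0)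
  ultimately have "x mod p \<in> (\<lambda>a. g ^ a mod p) ` {..<p - 1}"
    by (simp add: bij_betw_def)
  then obtain e where "e < p - 1" "g ^ e mod p = x mod p"
    by auto
  then show ?thesis
    using that by (simp add: cong_def)
qed

lemma prime_primroot_half_power:
  assumes "prime p" "p > 2" "residue_primroot p g"
  shows "p dvd 1 + g ^ ((p - 1) div 2)"
proof -
  define h where "h = (p - 1) div 2"
  have "odd p"
    using assms prime_odd_nat by blast
  then have p_minus_1: "p - 1 = 2 * h"
    by (simp add: h_def)
  have "[g ^ (p - 1) = 1] (mod p)"
    using assms fermat_theorem prime_not_dvd_primroot_power[of p g 1] by simp
  moreover have "g ^ (p - 1) = g ^ h * g ^ h"
    unfolding p_minus_1 by (simp add: mult_2 power_add)
  ultimately have "[int (g ^ h * g ^ h) = int 1] (mod int p)"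
    by (simp only: cong_int_iff)
  then have "[int (g ^ h) * int (g ^ h) = 1] (mod int p)"
    by simp
  moreover have "g > 0"
    using assms by (auto intro: Nat.gr0I)
  ultimately have "[int (g ^ h) = 1] (mod int p) \<or> [int (g ^ h) = - 1] (mod int p)"
    using assms(1) by (intro cong_square) simp_all
  moreover have "\<not> [g ^ h = g ^ 0] (mod p)"
    unfolding prime_primroot_power_cong_iff[OF assms(1,3)]
    using assms(2) p_minus_1 by (simp add: cong_def)
  ultimately have "[int (g ^ h) = - 1] (mod int p)"
    by (auto simp flip: cong_int_iff)
  then have "int p dvd int (1 + g ^ h)"
    by (simp add: cong_iff_dvd_diff add.commute)
  then show ?thesis
    unfolding h_def by (simp only: int_dvd_int_iff)
qed

lemma prime_primroot_dvd_1_plus_power_iff: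
  assumes "prime p" "p > 2" "residue_primroot p g"
  shows "p dvd 1 + g ^ c \<longleftrightarrow> c mod (p - 1) = (p - 1) div 2"
proof -
  define h where "h = (p - 1) div 2"
  have "[1 + g ^ h = 0] (mod p)"
    using prime_primroot_half_power[OF assms] by (simp add: h_def cong_0_iff)
  then have "p dvd 1 + g ^ c \<longleftrightarrow> [1 + g ^ c = 1 + g ^ h] (mod p)"
    by (metis cong_0_iff cong_sym cong_trans)
  also have "\<dots> \<longleftrightarrow> [c = h] (mod p - 1)"
    by (simp only: cong_add_lcancel_nat prime_primroot_power_cong_iff[OF assms(1,3)])
  also have "\<dots> \<longleftrightarrow> c mod (p - 1) = h"
    using assms(2) by (simp add: cong_def h_def)
  finally show ?thesis
    by (simp add: h_def)
qed

lemma sum_primroot_power_select: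
  assumes "prime p" "residue_primroot p g" "e < p - 1" "[g ^ e = x] (mod p)"
  shows "(\<Sum>a<p - 1. if [g ^ a = x] (mod p) then F a else 0) = F e"
proof -
  have "[g ^ a = x] (mod p) \<longleftrightarrow> a = e" if "a < p - 1" for a
  proof -
    have "[g ^ a = x] (mod p) \<longleftrightarrow> [g ^ a = g ^ e] (mod p)"
      using assms(4) by (meson cong_sym cong_trans)
    also have "\<dots> \<longleftrightarrow> [a = e] (mod p - 1)"
      using assms(1,2) by (rule prime_primroot_power_cong_iff)
    also have "\<dots> \<longleftrightarrow> a = e"
      using assms(3) that by (simp add: cong_def)
    finally show ?thesis .
  qed
  then have "(\<Sum>a<p - 1. if [g ^ a = x] (mod p) then F a else 0) =
      (\<Sum>a<p - 1. if a = e then F a else 0)"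
    by (intro sum.cong) auto
  also have "\<dots> = F e"
    using assms(3) by simp
  finally show ?thesis .
qed

lemma sum_primroot_power_select_dvd:
  assumes "prime p" "residue_primroot p g" "p dvd x"
  shows "(\<Sum>a<p - 1. if [g ^ a = x] (mod p) then F a else 0) = 0"
proof -
  have "\<not> [g ^ a = x] (mod p)" for a
    using assms prime_not_dvd_primroot_power[of p g a] cong_dvd_iff by blast
  then show ?thesis
    by simp
qed

locale gauss_periods =
  fixes p d \<omega> :: nat and \<zeta> :: complex
  assumes prime: "prime p" and p_gt_2: "p > 2" and d_dvd: "d dvd p - 1"
    and primroot: "residue_primroot p \<omega>" and root: "prim_root_unity p \<zeta>"
begin

definition f :: nat where "f = (p - 1) div d"
abbreviation \<theta> :: nat where "\<theta> \<equiv> if even f then 0 else d div 2"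
abbreviation \<eta> :: "nat \<Rightarrow> complex" where "\<eta> \<equiv> gauss_period p d \<omega> \<zeta>"

lemma d_mult_f: "d * f = p - 1"
  unfolding f_def by (rule dvd_mult_div_cancel[OF d_dvd])

lemma gauss_period_mod: "\<eta> (j mod d) = \<eta> j"
  by (simp add: gauss_period_def)

lemma gauss_period_add_mult: "\<eta> (j + d * q) = \<eta> j"
  by (simp add: gauss_period_def)

lemma root_power_period: "\<zeta> ^ \<omega> ^ (a + (p - 1)) = \<zeta> ^ \<omega> ^ a"
proof (rule prim_root_unity_power_cong[OF root])
  show "[\<omega> ^ (a + (p - 1)) = \<omega> ^ a] (mod p)"
    unfolding prime_primroot_power_cong_iff[OF prime primroot] by (simp add: cong_def)
qed

lemma sum_root_power_shift:
  "(\<Sum>k<f. \<zeta> ^ \<omega> ^ ((k + s) * d + j)) = (\<Sum>k<f. \<zeta> ^ \<omega> ^ (k * d + j))"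
proof (rule sum_lessThan_shift_periodic)
  fix x
  have "(x + f) * d + j = (x * d + j) + (p - 1)"
    by (subst d_mult_f[symmetric]) (simp add: algebra_simps)
  then show "\<zeta> ^ \<omega> ^ ((x + f) * d + j) = \<zeta> ^ \<omega> ^ (x * d + j)"
    by (simp only: root_power_period)
qed

lemma gauss_period_eq: "\<eta> i = (\<Sum>k<f. \<zeta> ^ \<omega> ^ (k * d + i))"
proof -
  have "\<eta> i = (\<Sum>k<f. \<zeta> ^ \<omega> ^ (k * d + i mod d))"
    by (simp add: gauss_period_def f_def flip: prim_root_unity_power_mod[OF root])
  also have "\<dots> = (\<Sum>k<f. \<zeta> ^ \<omega> ^ ((k + i div d) * d + i mod d))"
    by (rule sum_root_power_shift[symmetric])
  also have "\<dots> = (\<Sum>k<f. \<zeta> ^ \<omega> ^ (k * d + i))"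
    by (simp add: algebra_simps)
  finally show ?thesis .
qed

lemma sum_gauss_periods: "(\<Sum>i<d. \<eta> (i + a)) = -1"
proof -
  have "(\<Sum>i<d. \<eta> (i + a)) = (\<Sum>i<d. \<eta> i)"
    by (rule sum_lessThan_shift_periodic) (simp add: gauss_period_def)
  also have "\<dots> = (\<Sum>i<d. \<Sum>k<f. \<zeta> ^ \<omega> ^ (d * k + i))"
    by (simp add: gauss_period_eq mult.commute)
  also have "\<dots> = (\<Sum>a<d * f. \<zeta> ^ \<omega> ^ a)"
    by (rule sum_lessThan_mult_split[symmetric])
  also have "\<dots> = (\<Sum>a<p - 1. \<zeta> ^ (\<omega> ^ a mod p))"
    by (simp only: d_mult_f flip: prim_root_unity_power_mod[OF root])
  also have "\<dots> = (\<Sum>x\<in>{0<..<p}. \<zeta> ^ x)"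
    using residue_primroot_is_generator[of p \<omega>] prime_gt_1_nat[OF prime] primroot
    by (intro sum.reindex_bij_betw) (simp add: totient_prime totatives_prime prime)
  also have "\<dots> = -1"
    using prime_gt_1_nat[OF prime] by (rule prim_root_unity_sum_powers[OF root])
  finally show ?thesis .
qed

(* For p not dividing x this is the image of eta_i under the automorphism zeta \<mapsto> zeta^x. *)
definition conj_period :: "nat \<Rightarrow> nat \<Rightarrow> complex" where
  "conj_period i x = (\<Sum>u<f. \<zeta> ^ (\<omega> ^ (d * u + i) * x))"

lemma conj_period_cong_power:
  assumes "[\<omega> ^ e = x] (mod p)"
  shows "conj_period i x = \<eta> (i + e)"
proof -
  have "\<zeta> ^ (\<omega> ^ (d * u + i) * x) = \<zeta> ^ \<omega> ^ (u * d + (i + e))" for u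
  proof -
    have "[\<omega> ^ (d * u + i) * x = \<omega> ^ (d * u + i) * \<omega> ^ e] (mod p)"
      using assms by (simp add: cong_mult cong_sym)
    then have "\<zeta> ^ (\<omega> ^ (d * u + i) * x) = \<zeta> ^ (\<omega> ^ (d * u + i) * \<omega> ^ e)"
      by (rule prim_root_unity_power_cong[OF root])
    also have "\<omega> ^ (d * u + i) * \<omega> ^ e = \<omega> ^ (u * d + (i + e))"
      by (simp add: algebra_simps flip: power_add)
    finally show ?thesis .
  qed
  then show ?thesis
    by (simp add: conj_period_def gauss_period_eq)
qed

lemma conj_period_dvd:
  assumes "p dvd x"
  shows "conj_period i x = of_nat f"
proof -
  have "\<zeta> ^ (\<omega> ^ (d * u + i) * x) = 1" for u
    using assms prim_root_unity_power_mod[OF root, of "\<omega> ^ (d * u + i) * x"] by simp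
  then show ?thesis
    by (simp add: conj_period_def)
qed

lemma conj_period_eq_select:
  "conj_period i x = (if p dvd x then of_nat f else 0) +
     (\<Sum>a<p - 1. if [\<omega> ^ a = x] (mod p) then \<eta> (i + a) else 0)"
proof (cases "p dvd x")
  case True
  then show ?thesis
    using sum_primroot_power_select_dvd[OF prime primroot] by (simp add: conj_period_dvd)
next
  case False
  then obtain e where e: "e < p - 1" "[\<omega> ^ e = x] (mod p)"
    using prime_primroot_discrete_log[OF prime primroot] by blast
  then show ?thesis
    using False sum_primroot_power_select[OF prime primroot e, of "\<lambda>a. \<eta> (i + a)"]
    by (simp add: conj_period_cong_power)
qed

lemma sum_conj_periods:
  "(\<Sum>i<d. conj_period i x) = (if p dvd x then of_nat (p - 1) else -1)"
proof (cases "p dvd x")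
  case True
  then show ?thesis
    using d_mult_f by (simp add: conj_period_dvd flip: of_nat_mult)
next
  case False
  then obtain e where "[\<omega> ^ e = x] (mod p)"
    using prime_primroot_discrete_log[OF prime primroot] by blast
  then show ?thesis
    using False by (simp add: conj_period_cong_power sum_gauss_periods)
qed

lemma gauss_period_mult:
  "\<eta> i * \<eta> (i + \<nu>) = (\<Sum>v<f. conj_period i (1 + \<omega> ^ (d * v + \<nu>)))"
proof -
  have "\<eta> i * \<eta> (i + \<nu>) =
      (\<Sum>u<f. \<zeta> ^ \<omega> ^ (u * d + i) * (\<Sum>v<f. \<zeta> ^ \<omega> ^ ((v + u) * d + (i + \<nu>))))"
    by (simp add: gauss_period_eq sum_distrib_right sum_root_power_shift)
  also have "\<dots> = (\<Sum>u<f. \<Sum>v<f. \<zeta> ^ (\<omega> ^ (d * u + i) * (1 + \<omega> ^ (d * v + \<nu>))))"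
  proof -
    have "\<omega> ^ (d * u + i) * (1 + \<omega> ^ (d * v + \<nu>)) =
        \<omega> ^ (u * d + i) + \<omega> ^ ((v + u) * d + (i + \<nu>))" for u v
      by (simp add: algebra_simps flip: power_add)
    then show ?thesis
      by (simp add: sum_distrib_left power_add[of \<zeta>])
  qed
  also have "\<dots> = (\<Sum>v<f. \<Sum>u<f. \<zeta> ^ (\<omega> ^ (d * u + i) * (1 + \<omega> ^ (d * v + \<nu>))))"
    by (rule sum.swap)
  finally show ?thesis
    by (simp add: conj_period_def)
qed

lemma sum_if_dvd_1_plus_power:
  assumes "\<nu> < d"
  shows "(\<Sum>v<f. if p dvd 1 + \<omega> ^ (d * v + \<nu>) then c else 0) = (if \<theta> = \<nu> then c else 0)"
proof -
  define h where "h = (p - 1) div 2"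
  have "even (d * f)"
    using d_mult_f prime_odd_nat[OF prime p_gt_2] by simp
  then have \<theta>_eq: "\<theta> = h mod d"
    using even_mult_div_2_mod[of d f] d_mult_f by (simp add: h_def)
  have "h < d * f"
    using d_mult_f p_gt_2 by (simp add: h_def)
  then have h_div: "h div d < f"
    by (simp add: less_mult_imp_div_less mult.commute)
  have "p dvd 1 + \<omega> ^ (d * v + \<nu>) \<longleftrightarrow> v = h div d \<and> \<nu> = h mod d" if "v < f" for v
  proof -
    have "d * v + d \<le> d * f"
      using that by (metis Suc_leI mult_Suc_right mult_le_mono2 add.commute)
    then have "d * v + \<nu> < p - 1"
      using assms d_mult_f by linarith
    then have "p dvd 1 + \<omega> ^ (d * v + \<nu>) \<longleftrightarrow> d * v + \<nu> = h"
      unfolding prime_primroot_dvd_1_plus_power_iff[OF prime p_gt_2 primroot] by (simp add: h_def)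
    also have "\<dots> \<longleftrightarrow> v = h div d \<and> \<nu> = h mod d"
      using assms by auto
    finally show ?thesis .
  qed
  then have "{v \<in> {..<f}. p dvd 1 + \<omega> ^ (d * v + \<nu>)} = (if \<nu> = h mod d then {h div d} else {})"
    using h_div by auto
  then show ?thesis
    using \<theta>_eq by (simp add: sum.inter_filter[symmetric])
qed

lemma of_nat_cyc_num_eq_sum:
  assumes "\<nu> < d" "l < d"
  shows "of_nat (cyc_num p d \<omega> \<nu> l) =
    (\<Sum>q<f. \<Sum>v<f. if [\<omega> ^ (d * q + l) = 1 + \<omega> ^ (d * v + \<nu>)] (mod p) then 1 else (0::complex))"
proof -
  have "of_nat (cyc_num p d \<omega> \<nu> l) =
      (\<Sum>u<f. \<Sum>v<f. if [1 + \<omega> ^ (d * u + \<nu>) = \<omega> ^ (d * v + l)] (mod p) then 1 else (0::complex))"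
    using assms by (simp add: cyc_num_def f_def of_nat_card_pairs_eq_sum)
  also have "\<dots> =
      (\<Sum>v<f. \<Sum>u<f. if [1 + \<omega> ^ (d * u + \<nu>) = \<omega> ^ (d * v + l)] (mod p) then 1 else (0::complex))"
    by (rule sum.swap)
  finally show ?thesis
    by (simp add: cong_sym_eq)
qed

lemma gauss_period_mult_cyclotomic:
  assumes "\<nu> < d"
  shows "\<eta> i * \<eta> (i + \<nu>) = of_nat f * (if \<theta> = \<nu> then 1 else 0) +
    (\<Sum>l<d. of_nat (cyc_num p d \<omega> \<nu> l) * \<eta> (i + l))"
proof -
  let ?X = "\<lambda>v. 1 + \<omega> ^ (d * v + \<nu>)"
  let ?C = "\<lambda>a v. [\<omega> ^ a = ?X v] (mod p)"
  have "\<eta> i * \<eta> (i + \<nu>) = (\<Sum>v<f. if p dvd ?X v then of_nat f else 0) +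
      (\<Sum>v<f. \<Sum>a<p - 1. if ?C a v then \<eta> (i + a) else 0)"
    by (simp add: gauss_period_mult conj_period_eq_select sum.distrib)
  also have "(\<Sum>v<f. if p dvd ?X v then of_nat f else 0) = (if \<theta> = \<nu> then of_nat f else (0::complex))"
    by (rule sum_if_dvd_1_plus_power[OF assms])
  also have "(\<Sum>v<f. \<Sum>a<p - 1. if ?C a v then \<eta> (i + a) else 0) =
      (\<Sum>a<d * f. \<Sum>v<f. if ?C a v then \<eta> (i + a) else 0)"
    by (subst sum.swap) (simp only: d_mult_f)
  also have "\<dots> = (\<Sum>l<d. \<Sum>q<f. \<Sum>v<f. if ?C (d * q + l) v then \<eta> (i + l) else 0)"
  proof -
    have "\<eta> (i + (d * q + l)) = \<eta> (i + l)" for q l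
      using gauss_period_add_mult[of "i + l" q] by (simp add: algebra_simps)
    then show ?thesis
      by (simp add: sum_lessThan_mult_split cong: if_cong)
  qed
  also have "\<dots> = (\<Sum>l<d. of_nat (cyc_num p d \<omega> \<nu> l) * \<eta> (i + l))"
  proof (rule sum.cong[OF refl])
    fix l assume "l \<in> {..<d}"
    have "(if b then 1 else 0) * z = (if b then z else 0)" for b and z :: complex
      by simp
    then show "(\<Sum>q<f. \<Sum>v<f. if ?C (d * q + l) v then \<eta> (i + l) else 0) =
        of_nat (cyc_num p d \<omega> \<nu> l) * \<eta> (i + l)"
      using \<open>l \<in> {..<d}\<close> by (simp add: of_nat_cyc_num_eq_sum assms sum_distrib_right)
  qed
  finally show ?thesis
    by simp
qed

lemma nsum_eq: "nsum p d \<omega> \<zeta> k \<nu> = (\<Sum>i<d. \<eta> i ^ k * \<eta> (i + \<nu>))"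
  by (simp add: nsum_def gauss_period_mod)

lemma nsum_0: "nsum p d \<omega> \<zeta> 0 \<nu> = -1"
  by (simp add: nsum_eq sum_gauss_periods)

lemma nsum_1:
  assumes "\<nu> < d"
  shows "nsum p d \<omega> \<zeta> 1 \<nu> = of_nat p * (if \<theta> = \<nu> then 1 else 0) - of_nat f"
proof -
  let ?X = "\<lambda>v. 1 + \<omega> ^ (d * v + \<nu>)"
  have "nsum p d \<omega> \<zeta> 1 \<nu> = (\<Sum>i<d. \<Sum>v<f. conj_period i (?X v))"
    by (simp add: nsum_eq gauss_period_mult)
  also have "\<dots> = (\<Sum>v<f. \<Sum>i<d. conj_period i (?X v))"
    by (rule sum.swap)
  also have "\<dots> = (\<Sum>v<f. (if p dvd ?X v then of_nat p else 0) - 1)"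
    using p_gt_2 by (intro sum.cong) (auto simp: sum_conj_periods of_nat_diff)
  also have "\<dots> = (\<Sum>v<f. if p dvd ?X v then of_nat p else 0) - of_nat f"
    by (simp add: sum_subtractf)
  also have "(\<Sum>v<f. if p dvd ?X v then of_nat p else 0) = (if \<theta> = \<nu> then of_nat p else (0::complex))"
    by (rule sum_if_dvd_1_plus_power[OF assms])
  finally show ?thesis
    by simp
qed

lemma nsum_recurrence:
  assumes "\<nu> < d" and "k \<ge> 1"
  shows "nsum p d \<omega> \<zeta> (k + 1) \<nu> =
    (\<Sum>l<d. of_nat (cyc_num p d \<omega> \<nu> l) * nsum p d \<omega> \<zeta> k l)
    + of_nat f * (if \<theta> = \<nu> then 1 else 0) * nsum p d \<omega> \<zeta> (k - 1) 0"
proof -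
  let ?c = "\<lambda>l. of_nat (cyc_num p d \<omega> \<nu> l) :: complex"
  let ?\<delta> = "of_nat f * (if \<theta> = \<nu> then 1 else 0) :: complex"
  obtain j where k: "k = Suc j"
    using assms(2) by (cases k) auto
  have "nsum p d \<omega> \<zeta> (k + 1) \<nu> = (\<Sum>i<d. \<eta> i ^ k * (\<eta> i * \<eta> (i + \<nu>)))"
    by (simp add: nsum_eq algebra_simps)
  also have "\<dots> = (\<Sum>i<d. (\<Sum>l<d. ?c l * (\<eta> i ^ k * \<eta> (i + l))) + ?\<delta> * \<eta> i ^ k)"
    by (simp add: gauss_period_mult_cyclotomic[OF assms(1)] algebra_simps sum_distrib_left)
  also have "\<dots> = (\<Sum>i<d. \<Sum>l<d. ?c l * (\<eta> i ^ k * \<eta> (i + l))) + ?\<delta> * (\<Sum>i<d. \<eta> i ^ k)"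
    by (simp add: sum.distrib sum_distrib_left)
  also have "(\<Sum>i<d. \<Sum>l<d. ?c l * (\<eta> i ^ k * \<eta> (i + l))) =
      (\<Sum>l<d. \<Sum>i<d. ?c l * (\<eta> i ^ k * \<eta> (i + l)))"
    by (rule sum.swap)
  also have "\<dots> = (\<Sum>l<d. ?c l * nsum p d \<omega> \<zeta> k l)"
    by (simp add: nsum_eq sum_distrib_left)
  also have "(\<Sum>i<d. \<eta> i ^ k) = nsum p d \<omega> \<zeta> (k - 1) 0"
    unfolding k by (simp only: nsum_eq power_Suc2 add_0_right diff_Suc_1)
  finally show ?thesis .
qed

end

theorem lemma1:
  fixes p d \<omega> :: nat and \<zeta> :: complex
  assumes "prime p" and "p > 2" and "d \<ge> 2" and "d dvd p - 1"
    and "residue_primroot p \<omega>"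
    and "prim_root_unity p \<zeta>"
  defines "f \<equiv> (p - 1) div d"
  defines "\<theta> \<equiv> (if even f then 0 else d div 2)"
  shows "(\<forall>\<nu><d. nsum p d \<omega> \<zeta> 0 \<nu> = -1)
    \<and> (\<forall>\<nu><d. nsum p d \<omega> \<zeta> 1 \<nu> =
          of_nat p * (if \<theta> = \<nu> then 1 else 0) - of_nat f)
    \<and> (\<forall>\<nu><d. \<forall>k\<ge>1. nsum p d \<omega> \<zeta> (k + 1) \<nu> =
          (\<Sum>l<d. of_nat (cyc_num p d \<omega> \<nu> l) * nsum p d \<omega> \<zeta> k l)
          + of_nat f * (if \<theta> = \<nu> then 1 else 0) * nsum p d \<omega> \<zeta> (k - 1) 0)"
proof -
  interpret G: gauss_periods p d \<omega> \<zeta>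
    using assms by unfold_locales
  have f_eq: "f = G.f"
    by (simp add: f_def G.f_def)
  show ?thesis
    unfolding \<theta>_def f_eq using G.nsum_0 G.nsum_1 G.nsum_recurrence by blast
qed

end
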